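(* Let $\mathcal C$ be an EACP over $\mathbb R$ with natural basis $\{h_1,\dots,h_n,r\}$ and matrix of structural constants $M=A\oplus\mathbf b$, and suppose $\operatorname{rank}A=n$. Then every evolution subalgebra $\mathcal C_1$ of $\mathcal C$ is of the form $\mathcal C_1=\operatorname{span}\{f_1,\dots,f_m,ar\}$ for some $0\le m\le n$, $a\in\{0,1\}$ and vectors $f_i=\sum_{j=1}^n\alpha_{ij}h_j$ with $\alpha_{ij}\in\mathbb R$, $i=1,\dots,m$.
   Context: An EACP over a field $K$ is a $K$-algebra with a basis $\{h_1,\dots,h_n,r\}$ (natural basis) such that $h_ir=rh_i=\sum_{j=1}^n a_{ij}h_j+b_ir$, $h_ih_j=0$ for all $i,j$, and $rr=0$; its matrix of structural constants is $M=A\oplus\mathbf b$ with $A=(a_{ij})_{i,j=1}^n$, $\mathbf b=(b_1,\dots,b_n)^T$. An evolution subalgebra of $\mathcal C$ is a linear subspace $\mathcal C_1$ which itself has a basis $\{h'_1,\dots,h'_k,r'\}$ with a multiplication table of the same form, i.e. $h'_ih'_j=0$, $r'r'=0$, and $h'_ir'=r'h'_i=\sum_j a'_{ij}h'_j+b'_ir'$ for some scalars $a'_{ij},b'_i$. *)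

theory Defs
  imports "HOL-Analysis.Analysis"
begin

text \<open>An element
  \<open>\<Sum>j x_j h_j + s r\<close> is represented by the pair (x, s) in real^'n times real.
  The index type 'n has n = CARD('n) elements.\<close>

definition eacp_h :: "'n::finite \<Rightarrow> (real^'n) \<times> real" where
  "eacp_h j = (axis j 1, 0)"

definition eacp_r :: "(real^'n::finite) \<times> real" where
  "eacp_r = (0, 1)"

text \<open>Multiplication, extended bilinearly from the table
  h_i h_j = 0, r r = 0, h_i r = r h_i = \<Sum>j a_ij h_j + b_i r.
  Here A $ i $ j = a_ij and b $ i = b_i.\<close>

definition eacp_mult :: "real^'n^'n \<Rightarrow> real^'n \<Rightarrow>
    (real^'n::finite) \<times> real \<Rightarrow> (real^'n) \<times> real \<Rightarrow> (real^'n) \<times> real" where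
  "eacp_mult A b u v =
     (\<Sum>i\<in>UNIV. (fst u $ i * snd v + snd u * fst v $ i) *\<^sub>R
                  ((\<Sum>j\<in>UNIV. A $ i $ j *\<^sub>R eacp_h j) + b $ i *\<^sub>R eacp_r))"

definition evolution_subalgebra ::
    "real^'n^'n \<Rightarrow> real^'n \<Rightarrow> ((real^'n::finite) \<times> real) set \<Rightarrow> bool" where
  "evolution_subalgebra A b S \<longleftrightarrow> subspace S \<and>
     (\<exists>hs r'. distinct (r' # hs) \<and> independent (set (r' # hs)) \<and>
              span (set (r' # hs)) = S \<and>
              (\<forall>h\<in>set hs. \<forall>h'\<in>set hs. eacp_mult A b h h' = 0) \<and>
              eacp_mult A b r' r' = 0 \<and>
              (\<forall>h\<in>set hs. \<exists>a' b'. eacp_mult A b h r' = eacp_mult A b r' h \<and>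
                   eacp_mult A b h r' = (\<Sum>j<length hs. a' j *\<^sub>R hs ! j) + b' *\<^sub>R r'))"

end

theory Submission
  imports Defs
begin

text \<open>The square of \<open>u = x + s r\<close> (with \<open>x\<close> in the span of the \<open>h_j\<close>) is \<open>2 s (x r)\<close>,
  and its \<open>h\<close>-part is \<open>2 s A\<^sup>T x\<close>. Since \<open>A\<close> is invertible, \<open>u u = 0\<close> forces \<open>s = 0\<close> or
  \<open>x = 0\<close>. Every basis vector of an evolution subalgebra squares to zero, so each one lies
  either in \<open>span {h_1, \<dots>, h_n}\<close> or on the line \<open>\<real> r\<close>; the subalgebra is therefore spanned
  by its basis vectors of the first kind, which are independent and hence at most \<open>n\<close> in
  number, together with \<open>r\<close> if a basis vector of the second kind occurs.\<close>

lemma fst_eacp_mult_component: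
  "fst (eacp_mult A b u v) $ j = (\<Sum>i\<in>UNIV. (fst u $ i * snd v + snd u * fst v $ i) * A $ i $ j)"
  unfolding eacp_mult_def eacp_h_def eacp_r_def
  by (simp add: fst_sum sum_component axis_def if_distrib cong: if_cong)

lemma eacp_mult_self_eq_0_imp:
  fixes A :: "real^'n::finite^'n"
  assumes "rank A = CARD('n)" and "eacp_mult A b u u = 0"
  shows "fst u = 0 \<or> snd u = 0"
proof (rule ccontr)
  assume nonzero: "\<not> (fst u = 0 \<or> snd u = 0)"
  have "transpose A *v fst u = 0"
  proof (subst vec_eq_iff, intro allI)
    fix j
    have "(\<Sum>i\<in>UNIV. (2 * snd u) * (fst u $ i * A $ i $ j)) = 0"
      using arg_cong[OF assms(2), of "\<lambda>w. fst w $ j"]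
      unfolding fst_eacp_mult_component by (simp add: algebra_simps)
    hence "(\<Sum>i\<in>UNIV. fst u $ i * A $ i $ j) = 0"
      using nonzero by (simp add: sum_distrib_left[symmetric])
    thus "(transpose A *v fst u) $ j = 0 $ j"
      by (simp add: matrix_vector_mult_def transpose_def mult.commute)
  qed
  moreover have "rank (transpose A) = CARD('n)"
    using assms(1) by (simp add: rank_transpose)
  ultimately show False
    using nonzero matrix_nonfull_linear_equations_eq by metis
qed

lemma sum_scaleR_eacp_h: "(\<Sum>j\<in>UNIV. x $ j *\<^sub>R eacp_h j) = (x, 0)"
  unfolding eacp_h_def
  by (simp add: prod_eq_iff fst_sum snd_sum vec_eq_iff sum_component axis_def if_distrib
      cong: if_cong)

lemma span_pure_eq_span_h_part_insert_r:
  fixes B :: "((real^'n::finite) \<times> real) set"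
  assumes pure: "\<And>u. u \<in> B \<Longrightarrow> fst u = 0 \<or> snd u = 0"
  defines "a \<equiv> if \<exists>u\<in>B. snd u \<noteq> 0 then 1 else 0"
  shows "span B = span ({u\<in>B. snd u = 0} \<union> {a *\<^sub>R eacp_r})"
proof -
  have r_multiple: "u = snd u *\<^sub>R eacp_r" if "u \<in> B" "snd u \<noteq> 0" for u
    using pure[OF that(1)] that(2) unfolding eacp_r_def by (simp add: prod_eq_iff)
  show ?thesis
  proof (cases "\<exists>u\<in>B. snd u \<noteq> 0")
    case True
    then obtain v where v: "v \<in> B" "snd v \<noteq> 0" by blast
    have "(1 / snd v) *\<^sub>R v = (1 / snd v * snd v) *\<^sub>R eacp_r"
      using r_multiple[OF v] by (metis scaleR_scaleR)
    hence "eacp_r = (1 / snd v) *\<^sub>R v" using v(2) by simp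
    hence r_in: "eacp_r \<in> span B" by (metis span_mul span_base v(1))
    have "B \<subseteq> span ({u\<in>B. snd u = 0} \<union> {eacp_r})"
    proof
      fix u assume u: "u \<in> B"
      show "u \<in> span ({u\<in>B. snd u = 0} \<union> {eacp_r})"
      proof (cases "snd u = 0")
        case True
        with u show ?thesis by (intro span_base) simp
      next
        case False
        have "eacp_r \<in> span ({u\<in>B. snd u = 0} \<union> {eacp_r})" by (intro span_base) simp
        hence "snd u *\<^sub>R eacp_r \<in> span ({u\<in>B. snd u = 0} \<union> {eacp_r})" by (rule span_mul)
        thus ?thesis using r_multiple[OF u False] by argo
      qed
    qed
    moreover have "{u\<in>B. snd u = 0} \<union> {eacp_r} \<subseteq> span B"
      using r_in span_base by blast
    ultimately have "span B = span ({u\<in>B. snd u = 0} \<union> {eacp_r})"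
      by (simp only: span_eq)
    moreover have "a = 1" using True unfolding a_def by (simp only: if_True)
    ultimately show ?thesis by simp
  next
    case False
    hence "{u\<in>B. snd u = 0} = B" and "a = 0" unfolding a_def by auto
    thus ?thesis by simp
  qed
qed

lemma card_independent_h_part_le:
  fixes H :: "((real^'n::finite) \<times> real) set"
  assumes "independent H" and "\<And>u. u \<in> H \<Longrightarrow> snd u = 0"
  shows "card H \<le> CARD('n)"
proof -
  have "span H \<subseteq> {u. snd u = 0}"
    by (rule span_minimal) (use assms(2) in \<open>force simp: subspace_def\<close>)+
  hence "(0, 1) \<notin> span H" by auto
  hence "independent (insert (0, 1) H)"
    using assms(1) by (simp add: independent_insertI)
  hence "card (insert (0, 1) H) \<le> CARD('n) + 1"
    using independent_bound by fastforce
  moreover have "(0, 1) \<notin> H" using assms(2) by force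
  moreover have "finite H" using assms(1) by (rule independent_imp_finite)
  ultimately show ?thesis by simp
qed

lemma image_nth_pred_atLeastAtMost: "(\<lambda>i. xs ! (i - 1)) ` {1..length xs} = set xs"
proof
  show "(\<lambda>i. xs ! (i - 1)) ` {1..length xs} \<subseteq> set xs" by auto
  show "set xs \<subseteq> (\<lambda>i. xs ! (i - 1)) ` {1..length xs}"
  proof
    fix u assume "u \<in> set xs"
    then obtain k where "k < length xs" "u = xs ! (Suc k - 1)"
      by (metis in_set_conv_nth diff_Suc_1)
    thus "u \<in> (\<lambda>i. xs ! (i - 1)) ` {1..length xs}"
      by (intro image_eqI[of _ _ "Suc k"]) auto
  qed
qed

lemma h_part_eq_image_of_coordinates:
  fixes H :: "((real^'n::finite) \<times> real) set"
  assumes "finite H" and "\<And>u. u \<in> H \<Longrightarrow> snd u = 0"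
  shows "\<exists>\<alpha>. (\<lambda>i. \<Sum>j\<in>UNIV. \<alpha> i j *\<^sub>R eacp_h j) ` {1..card H} = H"
proof -
  obtain L where L: "set L = H" "distinct L" using finite_distinct_list[OF assms(1)] by blast
  define \<alpha> where "\<alpha> = (\<lambda>i j. fst (L ! (i - 1)) $ j)"
  have "(\<Sum>j\<in>UNIV. \<alpha> i j *\<^sub>R eacp_h j) = L ! (i - 1)" if "i \<in> {1..length L}" for i
  proof -
    have "i - 1 < length L" using that by auto
    hence "L ! (i - 1) \<in> H" unfolding L(1)[symmetric] by (rule nth_mem)
    hence "snd (L ! (i - 1)) = 0" by (rule assms(2))
    thus ?thesis
      unfolding \<alpha>_def sum_scaleR_eacp_h[of "fst (L ! (i - 1))", unfolded vec_lambda_eta]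
      by (simp add: prod_eq_iff)
  qed
  hence "(\<lambda>i. \<Sum>j\<in>UNIV. \<alpha> i j *\<^sub>R eacp_h j) ` {1..length L} = (\<lambda>i. L ! (i - 1)) ` {1..length L}"
    by (rule image_cong[OF refl])
  hence "(\<lambda>i. \<Sum>j\<in>UNIV. \<alpha> i j *\<^sub>R eacp_h j) ` {1..length L} = H"
    unfolding image_nth_pred_atLeastAtMost L(1) .
  thus ?thesis unfolding distinct_card[OF L(2), symmetric] L(1) by blast
qed

theorem proposition4p4:
  fixes A :: "real^'n::finite^'n" and b :: "real^'n"
    and S :: "((real^'n) \<times> real) set"
  assumes "rank A = CARD('n)"
    and "evolution_subalgebra A b S"
  shows "\<exists>m::nat. \<exists>a::real. \<exists>\<alpha>::nat \<Rightarrow> 'n \<Rightarrow> real.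
           m \<le> CARD('n) \<and> a \<in> {0, 1} \<and>
           S = span ((\<lambda>i. \<Sum>j\<in>UNIV. \<alpha> i j *\<^sub>R eacp_h j) ` {1..m} \<union> {a *\<^sub>R eacp_r})"
proof -
  obtain r' hs where indep: "independent (set (r' # hs))" and span_B: "span (set (r' # hs)) = S"
    and squares_h: "\<forall>h\<in>set hs. \<forall>h'\<in>set hs. eacp_mult A b h h' = 0"
    and square_r: "eacp_mult A b r' r' = 0"
    using assms(2) unfolding evolution_subalgebra_def by blast
  define B where "B = set (r' # hs)"
  have pure: "fst u = 0 \<or> snd u = 0" if "u \<in> B" for u
  proof (rule eacp_mult_self_eq_0_imp[OF assms(1)])
    show "eacp_mult A b u u = 0" using that squares_h square_r unfolding B_def by auto
  qed
  define H where "H = {u\<in>B. snd u = 0}"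
  define a :: real where "a = (if \<exists>u\<in>B. snd u \<noteq> 0 then 1 else 0)"
  have "H \<subseteq> B" unfolding H_def by (rule Collect_subset)
  hence "independent H" by (rule independent_mono[OF indep[folded B_def]])
  moreover have H_part: "\<And>u. u \<in> H \<Longrightarrow> snd u = 0" unfolding H_def by simp
  ultimately have "card H \<le> CARD('n)" by (rule card_independent_h_part_le)
  have "finite H" using \<open>independent H\<close> by (rule independent_imp_finite)
  with H_part obtain \<alpha> where "(\<lambda>i. \<Sum>j\<in>UNIV. \<alpha> i j *\<^sub>R eacp_h j) ` {1..card H} = H"
    using h_part_eq_image_of_coordinates by blast
  moreover have "S = span (H \<union> {a *\<^sub>R eacp_r})"
    unfolding span_B[symmetric] B_def[symmetric] H_def a_def
    by (rule span_pure_eq_span_h_part_insert_r) (rule pure)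
  moreover have "a \<in> {0, 1}" unfolding a_def by simp
  ultimately show ?thesis
    using \<open>card H \<le> CARD('n)\<close> by (intro exI[of _ "card H"] exI[of _ a] exI[of _ \<alpha>]) simp
qed

end
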